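(* Let $\overline{D}$ be FG declarations and $\sigma_m$ a TL method substitution. Suppose $\overline{D}\vdash t\triangleright u\leadsto E_1$, $\overline{D}\approx_k\sigma_m$, and $\models_k t: e\approx E_2$. Then $\models_k u: e.(u)\approx E_1\,E_2$.
   Context: Featherweight Go (FG). Field names $f$, method names $m$, variables $x$, structure type names $t_S,u_S$, interface type names $t_I,u_I$; types $t,u$ range over both kinds of names. A method signature is $M = (x_1\,t_1,\ldots,x_n\,t_n)\,t$; a method specification is $m M$. Expressions: $e ::= x \mid e.m(e_1,\ldots,e_n) \mid t_S\{e_1,\ldots,e_n\} \mid e.f \mid e.(t)$. Declarations: $\mathtt{type}\ t_S\ \mathtt{struct}\{f_1\,t_1 \ldots f_n\,t_n\}$, $\mathtt{type}\ t_I\ \mathtt{interface}\{S_1 \ldots S_q\}$ ($S_j$ method specifications, in this order), and method declarations $\mathtt{func}\ (x\ t_S)\ m M\ \{\mathtt{return}\ e\}$. It is assumed that structures are non-recursive, field names within a struct are distinct, method names within an interface are distinct, and each method declaration is uniquely identified by receiver type and method name. $\mathrm{methods}(\overline{D},t_S)=\{mM \mid \mathtt{func}\ (x\ t_S)\ mM\{\ldots\}\in\overline{D}\}$; $\mathrm{methods}(\overline{D},t_I)$ is the set of specifications of the declaration of $t_I$. Subtyping: $t_S <: t_S$, and $t <: u_I$ iff $\mathrm{methods}(\overline{D},t)\supseteq\mathrm{methods}(\overline{D},u_I)$. $\mathrm{methodLookup}(\overline{D},(m,t_S))$ is the unique declaration $\mathtt{func}\ (x\ t_S)\ mM\{\ldots\}\in\overline{D}$.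 FG values $v ::= t_S\{v_1,\ldots,v_n\}$. Reduction $\overline{D}\vdash d\longrightarrow e$ is closed under evaluation contexts $\mathcal{E} ::= [\,] \mid t_S\{\overline{v},\mathcal{E},\overline{e}\} \mid \mathcal{E}.f \mid \mathcal{E}.(t) \mid \mathcal{E}.m(\overline{e}) \mid v.m(\overline{v},\mathcal{E},\overline{e})$, with rules $t_S\{v_1..v_n\}.f_i \longrightarrow v_i$; $v.m(v_1..v_n)\longrightarrow [x\mapsto v, x_i\mapsto v_i]e$ if $v=t_S\{\ldots\}$ and $\mathtt{func}\ (x\ t_S)\ m(x_1\,t_1..x_n\,t_n)\,t\{\mathtt{return}\ e\}\in\overline{D}$; $v.(t)\longrightarrow v$ if $v=t_S\{\ldots\}$ and $t_S<:t$. $\overline{D}\vdash e\longrightarrow^{\le k} v$ means $e$ reduces to value $v$ in at most $k$ steps. Target language (TL): $E ::= X \mid K \mid E\,E \mid \lambda X.E \mid \mathtt{case}\ E\ \mathtt{of}\ [Pat_1\to E_1,\ldots]$, $Pat ::= K\,X_1\ldots X_n$, with tuple constructors $(E_1,\ldots,E_n)$; nested patterns abbreviate nested case expressions. TL values $V ::= X \mid K\,V_1\ldots V_n$. Given a method substitution $\sigma_m$ (finite map from variables $Y$ to $\lambda$-abstractions), reduction $\sigma_m\vdash E\longrightarrow E'$ is closed under contexts $R ::= [\,]\mid K\,\overline{V}\,R\,\overline{E}\mid \mathtt{case}\ R\ \mathtt{of}\ [\ldots]\mid R\,E\mid V\,R$ with rules $(\lambda X.E)\,V\longrightarrow[X\mapsto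 V]E$; $\mathtt{case}\ K\,V_1..V_n\ \mathtt{of}\ [\ldots]\longrightarrow[X_i\mapsto V_i]E'$ if $K\,X_1..X_n\to E'$ is a clause; $Y\,E\longrightarrow\sigma_m(Y)\,E$. $\sigma_m\vdash E\longrightarrow^{\le k}V$ analogously. Each struct $t_S$ has a TL constructor $K_{t_S}$, each interface $t_I$ a constructor $K_{t_I}$; the method declaration of $m$ for receiver $t_S$ has a TL variable $m_{t_S}$. Interface-value construction $\overline{D}\vdash t<:u_I\leadsto E$: if $\mathtt{type}\ t_I\ \mathtt{interface}\{m_1M_1..m_nM_n\}\in\overline{D}$ and $\mathrm{methods}(\overline{D},t_S)\supseteq\{m_iM_i\}$ then $\overline{D}\vdash t_S<:t_I\leadsto\lambda X.K_{t_I}(X,m_{1,t_S},\ldots,m_{n,t_S})$; if $\mathtt{type}\ t_I\ \mathtt{interface}\{R_1..R_n\}$, $\mathtt{type}\ u_I\ \mathtt{interface}\{S_1..S_q\}\in\overline{D}$ and $\pi:\{1..q\}\to\{1..n\}$ with $S_i=R_{\pi(i)}$, then $\overline{D}\vdash t_I<:u_I\leadsto\lambda X.\mathtt{case}\ X\ \mathtt{of}\ K_{t_I}(X,X_1,..,X_n)\to K_{u_I}(X,X_{\pi(1)},..,X_{\pi(q)})$. Interface-value destruction $\overline{D}\vdash t_I\triangleright u\leadsto E$: if $\mathtt{type}\ t_I\ \mathtt{interface}\{R_1..R_n\}\in\overline{D}$ and $t_S<:t_I$ then $\overline{D}\vdash t_I\triangleright t_S\leadsto\lambda X.\mathtt{case}\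 X\ \mathtt{of}\ K_{t_I}(K_{t_S}\,Y,X_1,..,X_n)\to K_{t_S}\,Y$; and $\overline{D}\vdash t_I\triangleright u_I\leadsto\lambda X.\mathtt{case}\ X\ \mathtt{of}\ K_{t_I}(Y,X_1,..,X_n)\to\mathtt{case}\ Y\ \mathtt{of}\ [Cls_1,\ldots]$, where for each struct declaration $t_{Sj}$ in $\overline{D}$ with $\overline{D}\vdash t_{Sj}<:u_I\leadsto E_j$ there is a clause $Cls_j = K_{t_{Sj}}\,Y'\to E_j\,(K_{t_{Sj}}\,Y')$. Step-indexed logical relation (relative to fixed $\overline{D}$ and $\sigma_m$), defined by the rules: (Exp) $\models_k t: e\approx E$ holds if for all $k_1<k$, $k_2<k$, FG values $v$ and TL values $V$ with $k-k_1-k_2>0$, $\overline{D}\vdash e\longrightarrow^{\le k_1}v$ and $\sigma_m\vdash E\longrightarrow^{\le k_2}V$, we have $\models_{k-k_1-k_2} t: v\approx V$. (Struct) $\models_k t_S: t_S\{v_1..v_n\}\approx K_{t_S}(V_1,..,V_n)$ holds if $\mathtt{type}\ t_S\ \mathtt{struct}\{f_1t_1..f_nt_n\}\in\overline{D}$ and $\models_k t_i: v_i\approx V_i$ for all $i$. (Iface) $\models_k t_I: v\approx K_{t_I}(V,V_1,..,V_n)$ holds if $V=K_{u_S}\,\overline{V'}$ for some struct $u_S$, $\models_{k_1}u_S: v\approx V$ for all $k_1<k$, $\mathrm{methods}(\overline{D},t_I)=\{m_1M_1,..,m_nM_n\}$ (in declaration order), and for all $k_2<k$ and $i$, $\models_{k_2}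 m_iM_i:\mathrm{methodLookup}(\overline{D},(m_i,u_S))\approx V_i$. (Method) $\models_k m(x_1t_1..x_nt_n)t:\mathtt{func}\ (x\ t_S)\ m(x_1t_1..x_nt_n)t\{\mathtt{return}\ e\}\approx V$ holds if for all $k'\le k$ and $v',V',v_i,V_i$ with $\models_{k'}t_S:v'\approx V'$ and $\models_{k'}t_i:v_i\approx V_i$ for all $i$, we have $\models_{k'}t:[x\mapsto v',x_i\mapsto v_i]e\approx(V\,V')\,(V_1,..,V_n)$. (Decls) $\overline{D}\approx_k\sigma_m$ iff for every $\mathtt{func}\ (x\ t_S)\ mM\{\mathtt{return}\ e\}\in\overline{D}$, $\models_k mM:\mathtt{func}\ (x\ t_S)\ mM\{\mathtt{return}\ e\}\approx m_{t_S}$ (the TL variable). *)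

theory Defs
  imports Main
begin

section \<open>Featherweight Go (FG)\<close>

type_synonym name = string

datatype ty = TS name | TI name

datatype msig = Sig "(name \<times> ty) list" ty

type_synonym mspec = "name \<times> msig"

datatype fexp =
    FVar name
  | FCall fexp name "fexp list"
  | FLit name "fexp list"
  | FSel fexp name
  | FAssert fexp ty

datatype decl =
    DStruct name "(name \<times> ty) list"
  | DIface name "mspec list"
  | DMeth name name name msig fexp            (* func (x tS) m M {return e}: DMeth x tS m M e *)

type_synonym decls = "decl list"

definition struct_graph :: "decls \<Rightarrow> (name \<times> name) set" where
  "struct_graph D = {(s, s'). \<exists>fs f. DStruct s fs \<in> set D \<and> (f, TS s') \<in> set fs}"

definition wf_decls :: "decls \<Rightarrow> bool" where
  "wf_decls D \<longleftrightarrow>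
     acyclic (struct_graph D)
   \<and> (\<forall>s fs. DStruct s fs \<in> set D \<longrightarrow> distinct (map fst fs))
   \<and> (\<forall>i Ss. DIface i Ss \<in> set D \<longrightarrow> distinct (map fst Ss))
   \<and> (\<forall>x x' s m M M' e e'. DMeth x s m M e \<in> set D \<longrightarrow> DMeth x' s m M' e' \<in> set D
        \<longrightarrow> x = x' \<and> M = M' \<and> e = e')
   \<and> (\<forall>s fs fs'. DStruct s fs \<in> set D \<longrightarrow> DStruct s fs' \<in> set D \<longrightarrow> fs = fs')
   \<and> (\<forall>i Ss Ss'. DIface i Ss \<in> set D \<longrightarrow> DIface i Ss' \<in> set D \<longrightarrow> Ss = Ss')"

fun methods :: "decls \<Rightarrow> ty \<Rightarrow> mspec set" where
  "methods D (TS s) = {(m, M). \<exists>x e. DMeth x s m M e \<in> set D}"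
| "methods D (TI i) = {S. \<exists>Ss. DIface i Ss \<in> set D \<and> S \<in> set Ss}"

definition subty :: "decls \<Rightarrow> ty \<Rightarrow> ty \<Rightarrow> bool" where
  "subty D t u \<longleftrightarrow> (\<exists>s. t = TS s \<and> u = TS s) \<or> (\<exists>i. u = TI i \<and> methods D u \<subseteq> methods D t)"

definition methodLookup :: "decls \<Rightarrow> name \<Rightarrow> name \<Rightarrow> decl" where
  "methodLookup D m s = (THE d. d \<in> set D \<and> (\<exists>x M e. d = DMeth x s m M e))"

inductive fval :: "fexp \<Rightarrow> bool" where
  "(\<forall>v \<in> set vs. fval v) \<Longrightarrow> fval (FLit s vs)"

text \<open>Substitution of (closed) values for variables.\<close>
fun fsubst :: "(name \<rightharpoonup> fexp) \<Rightarrow> fexp \<Rightarrow> fexp" where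
  "fsubst \<rho> (FVar x) = (case \<rho> x of Some v \<Rightarrow> v | None \<Rightarrow> FVar x)"
| "fsubst \<rho> (FCall e m es) = FCall (fsubst \<rho> e) m (map (fsubst \<rho>) es)"
| "fsubst \<rho> (FLit s es) = FLit s (map (fsubst \<rho>) es)"
| "fsubst \<rho> (FSel e f) = FSel (fsubst \<rho> e) f"
| "fsubst \<rho> (FAssert e t) = FAssert (fsubst \<rho> e) t"

inductive fstep :: "decls \<Rightarrow> fexp \<Rightarrow> fexp \<Rightarrow> bool" where
  field: "\<lbrakk> \<forall>v \<in> set vs. fval v; DStruct s fs \<in> set D; length vs = length fs;
            i < length fs; fst (fs ! i) = f \<rbrakk>
          \<Longrightarrow> fstep D (FSel (FLit s vs) f) (vs ! i)"
| call: "\<lbrakk> v = FLit s ws; fval v; \<forall>w \<in> set vs. fval w;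
           DMeth x s m (Sig ps t) e \<in> set D; length ps = length vs \<rbrakk>
          \<Longrightarrow> fstep D (FCall v m vs) (fsubst (map_of (zip (x # map fst ps) (v # vs))) e)"
| assert: "\<lbrakk> v = FLit s ws; fval v; subty D (TS s) t \<rbrakk> \<Longrightarrow> fstep D (FAssert v t) v"
| ctx_lit: "\<lbrakk> \<forall>v \<in> set vs. fval v; fstep D e e' \<rbrakk>
          \<Longrightarrow> fstep D (FLit s (vs @ e # es)) (FLit s (vs @ e' # es))"
| ctx_sel: "fstep D e e' \<Longrightarrow> fstep D (FSel e f) (FSel e' f)"
| ctx_assert: "fstep D e e' \<Longrightarrow> fstep D (FAssert e t) (FAssert e' t)"
| ctx_recv: "fstep D e e' \<Longrightarrow> fstep D (FCall e m es) (FCall e' m es)"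
| ctx_arg: "\<lbrakk> fval v; \<forall>w \<in> set vs. fval w; fstep D e e' \<rbrakk>
          \<Longrightarrow> fstep D (FCall v m (vs @ e # es)) (FCall v m (vs @ e' # es))"

definition fsteps_le :: "decls \<Rightarrow> nat \<Rightarrow> fexp \<Rightarrow> fexp \<Rightarrow> bool" where
  "fsteps_le D k e v \<longleftrightarrow> (\<exists>n \<le> k. (fstep D ^^ n) e v) \<and> fval v"

section \<open>Target language (TL)\<close>

datatype tcon = KS name | KI name | KTup nat

datatype tvar = MV name name | LV nat

datatype tl =
    TV tvar
  | TC tcon
  | TAp tl tl
  | TLam tvar tl
  | TCase tl "(tcon \<times> tvar list \<times> tl) list"

definition conapp :: "tcon \<Rightarrow> tl list \<Rightarrow> tl" where
  "conapp K es = foldl TAp (TC K) es"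

definition ttuple :: "tl list \<Rightarrow> tl" where
  "ttuple es = conapp (KTup (length es)) es"

inductive tval :: "tl \<Rightarrow> bool" where
  "tval (TV x)"
| "(\<forall>V \<in> set Vs. tval V) \<Longrightarrow> tval (conapp K Vs)"

fun tsubst :: "(tvar \<rightharpoonup> tl) \<Rightarrow> tl \<Rightarrow> tl" where
  "tsubst \<rho> (TV x) = (case \<rho> x of Some e \<Rightarrow> e | None \<Rightarrow> TV x)"
| "tsubst \<rho> (TC k) = TC k"
| "tsubst \<rho> (TAp a b) = TAp (tsubst \<rho> a) (tsubst \<rho> b)"
| "tsubst \<rho> (TLam x e) = TLam x (tsubst (\<rho>(x := None)) e)"
| "tsubst \<rho> (TCase e cls) =
     TCase (tsubst \<rho> e) (map (\<lambda>(K, xs, b). (K, xs, tsubst (\<rho> |` (- set xs)) b)) cls)"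

definition method_subst :: "(tvar \<rightharpoonup> tl) \<Rightarrow> bool" where
  "method_subst \<sigma> \<longleftrightarrow> finite (dom \<sigma>) \<and> (\<forall>F \<in> ran \<sigma>. \<exists>x b. F = TLam x b)"

inductive tstep :: "(tvar \<rightharpoonup> tl) \<Rightarrow> tl \<Rightarrow> tl \<Rightarrow> bool" where
  beta: "tval V \<Longrightarrow> tstep \<sigma> (TAp (TLam x E) V) (tsubst [x \<mapsto> V] E)"
| casek: "\<lbrakk> \<forall>V \<in> set Vs. tval V; (K, Xs, E') \<in> set cls; length Xs = length Vs \<rbrakk>
          \<Longrightarrow> tstep \<sigma> (TCase (conapp K Vs) cls) (tsubst (map_of (zip Xs Vs)) E')"
| meth: "\<sigma> y = Some F \<Longrightarrow> tstep \<sigma> (TAp (TV y) E) (TAp F E)"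
| ctx_appl: "tstep \<sigma> E E' \<Longrightarrow> tstep \<sigma> (TAp E E2) (TAp E' E2)"
| ctx_appr: "\<lbrakk> tval V; tstep \<sigma> E E' \<rbrakk> \<Longrightarrow> tstep \<sigma> (TAp V E) (TAp V E')"
| ctx_case: "tstep \<sigma> E E' \<Longrightarrow> tstep \<sigma> (TCase E cls) (TCase E' cls)"

definition tsteps_le :: "(tvar \<rightharpoonup> tl) \<Rightarrow> nat \<Rightarrow> tl \<Rightarrow> tl \<Rightarrow> bool" where
  "tsteps_le \<sigma> k E V \<longleftrightarrow> (\<exists>n \<le> k. (tstep \<sigma> ^^ n) E V) \<and> tval V"

section \<open>Interface-value construction and destruction\<close>

text \<open>Variables used in the generated code (nested patterns expanded into nested cases).\<close>
abbreviation "vX \<equiv> LV 0"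
abbreviation "vZ \<equiv> LV 1"
abbreviation "vY \<equiv> LV 2"
abbreviation "vYp \<equiv> LV 3"
definition vXs :: "nat \<Rightarrow> tvar list" where "vXs n = map (\<lambda>i. LV (i + 4)) [0..<n]"

inductive constr :: "decls \<Rightarrow> ty \<Rightarrow> ty \<Rightarrow> tl \<Rightarrow> bool" where
  struct_iface:
  "\<lbrakk> DIface i Ss \<in> set D; set Ss \<subseteq> methods D (TS s) \<rbrakk>
   \<Longrightarrow> constr D (TS s) (TI i)
        (TLam vX (TAp (TC (KI i)) (ttuple (TV vX # map (\<lambda>(m, _). TV (MV m s)) Ss))))"
| iface_iface:
  "\<lbrakk> DIface i Rs \<in> set D; DIface j Ss \<in> set D; length \<pi> = length Ss;
     \<forall>q < length Ss. \<pi> ! q < length Rs \<and> Ss ! q = Rs ! (\<pi> ! q) \<rbrakk>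
   \<Longrightarrow> constr D (TI i) (TI j)
        (TLam vX (TCase (TV vX)
           [(KI i, [vZ], TCase (TV vZ)
              [(KTup (Suc (length Rs)), vY # vXs (length Rs),
                TAp (TC (KI j)) (ttuple (TV vY # map (\<lambda>p. TV (vXs (length Rs) ! p)) \<pi>)))])]))"

inductive destr :: "decls \<Rightarrow> ty \<Rightarrow> ty \<Rightarrow> tl \<Rightarrow> bool" where
  to_struct:
  "\<lbrakk> DIface i Rs \<in> set D; subty D (TS s) (TI i) \<rbrakk>
   \<Longrightarrow> destr D (TI i) (TS s)
        (TLam vX (TCase (TV vX)
           [(KI i, [vZ], TCase (TV vZ)
              [(KTup (Suc (length Rs)), vY # vXs (length Rs),
                TCase (TV vY) [(KS s, [vYp], TAp (TC (KS s)) (TV vYp))])])]))"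
| to_iface:
  "\<lbrakk> DIface i Rs \<in> set D;
     map fst sEs = [s. DStruct s fs \<leftarrow> D, \<exists>E. constr D (TS s) (TI j) E];
     \<forall>(s, E) \<in> set sEs. constr D (TS s) (TI j) E \<rbrakk>
   \<Longrightarrow> destr D (TI i) (TI j)
        (TLam vX (TCase (TV vX)
           [(KI i, [vZ], TCase (TV vZ)
              [(KTup (Suc (length Rs)), vY # vXs (length Rs),
                TCase (TV vY)
                  (map (\<lambda>(s, E). (KS s, [vYp], TAp E (TAp (TC (KS s)) (TV vYp)))) sEs))])]))"

section \<open>Step-indexed logical relation\<close>

type_synonym vrel = "nat \<Rightarrow> ty \<Rightarrow> fexp \<Rightarrow> tl \<Rightarrow> bool"

text \<open>(Exp), relative to a value relation R (only used at indices < k).\<close>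
definition exp_rel_with :: "decls \<Rightarrow> (tvar \<rightharpoonup> tl) \<Rightarrow> vrel \<Rightarrow> nat \<Rightarrow> ty \<Rightarrow> fexp \<Rightarrow> tl \<Rightarrow> bool" where
  "exp_rel_with D \<sigma> R k t e E \<longleftrightarrow>
     (\<forall>k1 k2 v V. k1 < k \<longrightarrow> k2 < k \<longrightarrow> k - k1 - k2 > 0 \<longrightarrow>
        fsteps_le D k1 e v \<longrightarrow> tsteps_le \<sigma> k2 E V \<longrightarrow> R (k - k1 - k2) t v V)"

text \<open>(Method), relative to R (only used at indices <= k).\<close>
definition meth_rel_with :: "decls \<Rightarrow> (tvar \<rightharpoonup> tl) \<Rightarrow> vrel \<Rightarrow> nat \<Rightarrow> mspec \<Rightarrow> decl \<Rightarrow> tl \<Rightarrow> bool" where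
  "meth_rel_with D \<sigma> R k S d V \<longleftrightarrow>
     (\<exists>x s m ps t e. S = (m, Sig ps t) \<and> d = DMeth x s m (Sig ps t) e \<and>
        (\<forall>k' \<le> k. \<forall>v' V' vs Vs. length vs = length ps \<longrightarrow> length Vs = length ps \<longrightarrow>
           R k' (TS s) v' V' \<longrightarrow> (\<forall>i < length ps. R k' (snd (ps ! i)) (vs ! i) (Vs ! i)) \<longrightarrow>
           exp_rel_with D \<sigma> R k' t (fsubst (map_of (zip (x # map fst ps) (v' # vs))) e)
                                  (TAp (TAp V V') (ttuple Vs))))"

text \<open>(Struct) and (Iface) at level k, given the relation R at lower levels.\<close>
inductive val_lvl :: "decls \<Rightarrow> (tvar \<rightharpoonup> tl) \<Rightarrow> vrel \<Rightarrow> nat \<Rightarrow> ty \<Rightarrow> fexp \<Rightarrow> tl \<Rightarrow> bool"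
  for D \<sigma> R k where
  Struct: "\<lbrakk> DStruct s fs \<in> set D; length vs = length fs; length Vs = length fs;
             \<forall>i < length fs. val_lvl D \<sigma> R k (snd (fs ! i)) (vs ! i) (Vs ! i) \<rbrakk>
           \<Longrightarrow> val_lvl D \<sigma> R k (TS s) (FLit s vs) (TAp (TC (KS s)) (ttuple Vs))"
| Iface: "\<lbrakk> V = TAp (TC (KS u)) W;
            \<forall>k1 < k. R k1 (TS u) v V;
            DIface i Ss \<in> set D; length Vs = length Ss;
            \<forall>k2 < k. \<forall>j < length Ss.
               meth_rel_with D \<sigma> R k2 (Ss ! j) (methodLookup D (fst (Ss ! j)) u) (Vs ! j) \<rbrakk>
           \<Longrightarrow> val_lvl D \<sigma> R k (TI i) v (TAp (TC (KI i)) (ttuple (V # Vs)))"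

function val_rel :: "decls \<Rightarrow> (tvar \<rightharpoonup> tl) \<Rightarrow> nat \<Rightarrow> ty \<Rightarrow> fexp \<Rightarrow> tl \<Rightarrow> bool" where
  "val_rel D \<sigma> k = val_lvl D \<sigma> (\<lambda>j. if j < k then val_rel D \<sigma> j else (\<lambda>_ _ _. False)) k"
  by auto
termination by (relation "measure (\<lambda>(D, \<sigma>, k). k)") auto

definition exp_rel :: "decls \<Rightarrow> (tvar \<rightharpoonup> tl) \<Rightarrow> nat \<Rightarrow> ty \<Rightarrow> fexp \<Rightarrow> tl \<Rightarrow> bool" where
  "exp_rel D \<sigma> k t e E = exp_rel_with D \<sigma> (val_rel D \<sigma>) k t e E"

definition meth_rel :: "decls \<Rightarrow> (tvar \<rightharpoonup> tl) \<Rightarrow> nat \<Rightarrow> mspec \<Rightarrow> decl \<Rightarrow> tl \<Rightarrow> bool" where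
  "meth_rel D \<sigma> k S d V = meth_rel_with D \<sigma> (val_rel D \<sigma>) k S d V"

definition decls_rel :: "decls \<Rightarrow> (tvar \<rightharpoonup> tl) \<Rightarrow> nat \<Rightarrow> bool" where
  "decls_rel D \<sigma> k \<longleftrightarrow>
     (\<forall>x s m M e. DMeth x s m M e \<in> set D \<longrightarrow>
        meth_rel D \<sigma> k (m, M) (DMeth x s m M e) (TV (MV m s)))"

end

theory Submission
  imports Defs
begin

(* Target values are normal forms and lambda-abstractions are not values, so E1 E2 reduces to a
   value only if E2 already is one; then (Exp) at zero target steps relates E2 at type t to the
   value v that e reaches, in fewer steps than e.(u) needs.  A related interface value
   K_tI(V0, ...) carries a struct value V0 related to v at all lower indices.  The destructor
   unpacks V0 and either returns it or, for an interface u, passes it to the constructor for u,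
   whose method slots are the variables m_uS, related to their declarations by (Decls). *)

fun tl_head :: "tl \<Rightarrow> tl" where
  "tl_head (TAp a b) = tl_head a"
| "tl_head E = E"

lemma conapp_Nil [simp]: "conapp K [] = TC K"
  by (simp add: conapp_def)

lemma conapp_snoc [simp]: "conapp K (xs @ [x]) = TAp (conapp K xs) x"
  by (simp add: conapp_def)

lemma conapp_single: "conapp K [x] = TAp (TC K) x"
  by (simp add: conapp_def)

lemma tl_head_conapp [simp]: "tl_head (conapp K xs) = TC K"
  by (induction xs rule: rev_induct) auto

lemma conapp_inject [simp]: "conapp K xs = conapp K' ys \<longleftrightarrow> K = K' \<and> xs = ys"
proof
  show "conapp K xs = conapp K' ys \<Longrightarrow> K = K' \<and> xs = ys"
  proof (induction xs arbitrary: ys rule: rev_induct)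
    case Nil
    then show ?case by (cases ys rule: rev_exhaust) auto
  next
    case (snoc x xs)
    then show ?case by (cases ys rule: rev_exhaust) auto
  qed
qed simp

lemma ttuple_inject [simp]: "ttuple xs = ttuple ys \<longleftrightarrow> xs = ys"
  by (auto simp: ttuple_def)

lemma tval_head: "tval E \<Longrightarrow> (\<exists>x. E = TV x) \<or> (\<exists>K. tl_head E = TC K)"
  by (erule tval.cases) auto

lemma not_tval_TLam [simp]: "\<not> tval (TLam x B)"
  and not_tval_TCase [simp]: "\<not> tval (TCase E cls)"
  and not_tval_TAp_TLam [simp]: "\<not> tval (TAp (TLam x B) E)"
  and not_tval_TAp_TV [simp]: "\<not> tval (TAp (TV y) E)"
  by (auto dest: tval_head)

lemma tval_TApD: "tval (TAp a b) \<Longrightarrow> tval a \<and> tval b"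
proof (erule tval.cases)
  fix K Vs assume "TAp a b = conapp K Vs" and Vs: "\<forall>V \<in> set Vs. tval V"
  then obtain Ws where "Vs = Ws @ [b]" and "a = conapp K Ws"
    by (cases Vs rule: rev_exhaust) auto
  with Vs show ?thesis by (auto intro: tval.intros)
qed simp

lemma tval_no_tstep: "tstep \<sigma> E E' \<Longrightarrow> \<not> tval E"
  by (induction rule: tstep.induct) (auto dest: tval_TApD)

lemma tval_rtranclp_tstep: "(tstep \<sigma>)\<^sup>*\<^sup>* V V' \<Longrightarrow> tval V \<Longrightarrow> V' = V"
  by (erule converse_rtranclpE) (auto dest: tval_no_tstep)

lemma tstep_TAp_TLam: "tstep \<sigma> (TAp (TLam x B) E) E' \<Longrightarrow> tval E \<and> E' = tsubst [x \<mapsto> E] B"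
  by (erule tstep.cases) (auto elim: tstep.cases)

lemma tstep_TCase:
  "tstep \<sigma> (TCase E cls) E' \<Longrightarrow> tval E \<Longrightarrow>
   \<exists>K Vs Xs B. E = conapp K Vs \<and> (\<forall>V \<in> set Vs. tval V) \<and> (K, Xs, B) \<in> set cls
     \<and> length Xs = length Vs \<and> E' = tsubst (map_of (zip Xs Vs)) B"
  by (erule tstep.cases) (auto dest: tval_no_tstep)

lemma beta_run:
  assumes "(tstep \<sigma>)\<^sup>*\<^sup>* (TAp (TLam x B) E) V" and "tval V"
  shows "tval E \<and> (tstep \<sigma>)\<^sup>*\<^sup>* (tsubst [x \<mapsto> E] B) V"
  using assms(1)
proof (cases rule: converse_rtranclpE)
  case base
  with assms(2) show ?thesis by auto
next
  case (step E')
  then show ?thesis by (auto dest: tstep_TAp_TLam)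
qed

lemma case_run:
  assumes "(tstep \<sigma>)\<^sup>*\<^sup>* (TCase E cls) V" and "tval V" and "tval E"
  shows "\<exists>K Vs Xs B. E = conapp K Vs \<and> (\<forall>V \<in> set Vs. tval V) \<and> (K, Xs, B) \<in> set cls
     \<and> length Xs = length Vs \<and> (tstep \<sigma>)\<^sup>*\<^sup>* (tsubst (map_of (zip Xs Vs)) B) V"
  using assms(1)
proof (cases rule: converse_rtranclpE)
  case base
  with assms(2) show ?thesis by auto
next
  case (step E')
  with assms(3) show ?thesis by (blast dest: tstep_TCase)
qed

lemma fval_no_fstep: "fstep D e e' \<Longrightarrow> \<not> fval e"
  by (induction rule: fstep.induct) (auto elim: fval.cases)

lemma fval_relpowp_fstep: "(fstep D ^^ n) e v \<Longrightarrow> fval e \<Longrightarrow> v = e"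
  by (cases n) (auto dest: fval_no_fstep dest!: relpowp_Suc_D2 simp del: relpowp.simps(2))

lemma fsteps_FAssert_operand:
  "(fstep D ^^ n) (FAssert e u) v \<Longrightarrow> fval v \<Longrightarrow> \<exists>n' < n. (fstep D ^^ n') e v"
proof (induction n arbitrary: e)
  case 0
  then show ?case by (auto elim: fval.cases)
next
  case (Suc n)
  then obtain e' where first: "fstep D (FAssert e u) e'" and rest: "(fstep D ^^ n) e' v"
    using relpowp_Suc_D2[OF Suc.prems(1)] by blast
  from first show ?case
  proof cases
    case assert
    with rest have "v = e" by (auto dest: fval_relpowp_fstep)
    then show ?thesis by auto
  next
    case (ctx_assert e'')
    with Suc.IH rest obtain n' where "n' < n" "(fstep D ^^ n') e'' v"
      using Suc.prems(2) by blast
    with ctx_assert show ?thesis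
      by (intro exI[of _ "Suc n'"]) (auto intro: relpowp_Suc_I2 simp del: relpowp.simps(2))
  qed
qed

fun fv :: "tl \<Rightarrow> tvar set" where
  "fv (TV x) = {x}"
| "fv (TC K) = {}"
| "fv (TAp a b) = fv a \<union> fv b"
| "fv (TLam x E) = fv E - {x}"
| "fv (TCase E cls) = fv E \<union> (\<Union>(K, xs, b) \<in> set cls. fv b - set xs)"

lemma tsubst_id: "\<forall>x \<in> fv E. \<rho> x = None \<Longrightarrow> tsubst \<rho> E = E"
proof (induction E arbitrary: \<rho>)
  case (TCase E cls)
  have "map (\<lambda>(K, xs, b). (K, xs, tsubst (\<rho> |` (- set xs)) b)) cls = cls"
  proof (rule map_idI)
    fix c assume c: "c \<in> set cls"
    obtain K xs b where cb: "c = (K, xs, b)" by (cases c)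
    have "tsubst (\<rho> |` (- set xs)) b = b"
      using c cb TCase.prems by (intro TCase.IH(2)[of c "(xs, b)" b]) (auto simp: restrict_map_def)
    with cb show "(\<lambda>(K, xs, b). (K, xs, tsubst (\<rho> |` (- set xs)) b)) c = c" by simp
  qed
  with TCase show ?case by simp
qed auto

lemma tsubst_conapp: "tsubst \<rho> (conapp K es) = conapp K (map (tsubst \<rho>) es)"
  by (induction es rule: rev_induct) auto

lemma fv_conapp: "fv (conapp K es) = (\<Union>e \<in> set es. fv e)"
  by (induction es rule: rev_induct) auto

(* Reducing generated code only substitutes for local variables LV, so it leaves such clause
   bodies unchanged; method variables MV may still occur free in them. *)
definition local_closed_clauses :: "(tcon \<times> tvar list \<times> tl) list \<Rightarrow> bool" where
  "local_closed_clauses cls \<longleftrightarrow> (\<forall>(K, xs, b) \<in> set cls. fv b \<inter> range LV \<subseteq> set xs)"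

lemma tsubst_TCase_local_closed:
  assumes "dom \<rho> \<subseteq> range LV" and "local_closed_clauses cls"
  shows "tsubst \<rho> (TCase E cls) = TCase (tsubst \<rho> E) cls"
proof -
  have "tsubst (\<rho> |` (- set xs)) b = b" if "(K, xs, b) \<in> set cls" for K xs b
    using assms that by (intro tsubst_id) (fastforce simp: local_closed_clauses_def restrict_map_def)
  then show ?thesis by (auto intro: map_idI)
qed

lemma fv_TCase_local_closed:
  "local_closed_clauses cls \<Longrightarrow> fv (TCase E cls) \<inter> range LV = fv E \<inter> range LV"
  by (fastforce simp: local_closed_clauses_def)

lemma vXs_local: "set (vXs r) \<subseteq> range LV"
  and vXs_length [simp]: "length (vXs r) = r"
  by (auto simp: vXs_def)

lemma iface_unpack_run:
  assumes run: "(tstep \<sigma>)\<^sup>*\<^sup>* (TAp (TLam vX (TCase (TV vX) [(KI i, [vZ], TCase (TV vZ)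
      [(KTup (Suc r), vY # vXs r, TCase (TV vY) cls)])])) E) V"
    and "tval V" and "local_closed_clauses cls"
  shows "tval E \<and> (\<exists>V0 Vs. E = TAp (TC (KI i)) (ttuple (V0 # Vs)) \<and> tval V0
           \<and> (tstep \<sigma>)\<^sup>*\<^sup>* (TCase V0 cls) V)"
proof -
  define C2 where "C2 = TCase (TV vY) cls"
  define C1 where "C1 = TCase (TV vZ) [(KTup (Suc r), vY # vXs r, C2)]"
  have "fv C2 \<inter> range LV = {vY}"
    using fv_TCase_local_closed[OF assms(3), of "TV vY"] by (simp add: C2_def)
  then have C2_closed: "local_closed_clauses [(KTup (Suc r), vY # vXs r, C2)]"
    by (auto simp: local_closed_clauses_def)
  have "fv C1 \<inter> range LV = {vZ}"
    using fv_TCase_local_closed[OF C2_closed, of "TV vZ"] by (simp add: C1_def)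
  then have C1_closed: "local_closed_clauses [(KI i, [vZ], C1)]"
    by (auto simp: local_closed_clauses_def)
  have "tsubst [vX \<mapsto> E] (TCase (TV vX) [(KI i, [vZ], C1)]) = TCase E [(KI i, [vZ], C1)]"
    by (subst tsubst_TCase_local_closed[OF _ C1_closed]) auto
  with beta_run[OF run[folded C2_def, folded C1_def] \<open>tval V\<close>]
  have "tval E" and "(tstep \<sigma>)\<^sup>*\<^sup>* (TCase E [(KI i, [vZ], C1)]) V"
    by auto
  from case_run[OF this(2) \<open>tval V\<close> \<open>tval E\<close>] obtain Z where
    E: "E = TAp (TC (KI i)) Z" and "tval Z" and "(tstep \<sigma>)\<^sup>*\<^sup>* (tsubst [vZ \<mapsto> Z] C1) V"
    by (auto simp: Suc_length_conv conapp_single)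
  moreover have "tsubst [vZ \<mapsto> Z] C1 = TCase Z [(KTup (Suc r), vY # vXs r, C2)]"
    unfolding C1_def by (subst tsubst_TCase_local_closed[OF _ C2_closed]) auto
  ultimately have "(tstep \<sigma>)\<^sup>*\<^sup>* (TCase Z [(KTup (Suc r), vY # vXs r, C2)]) V"
    by simp
  from case_run[OF this \<open>tval V\<close> \<open>tval Z\<close>] obtain V0 Vs where
    Z: "Z = conapp (KTup (Suc r)) (V0 # Vs)" and "length Vs = r" and "tval V0"
    and "(tstep \<sigma>)\<^sup>*\<^sup>* (tsubst (map_of (zip (vY # vXs r) (V0 # Vs))) C2) V"
    by (auto simp: Suc_length_conv)
  moreover have "tsubst (map_of (zip (vY # vXs r) (V0 # Vs))) C2 = TCase V0 cls"
    unfolding C2_def using \<open>length Vs = r\<close> vXs_local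
    by (subst tsubst_TCase_local_closed[OF _ assms(3)]) (auto simp: dom_map_of_zip)
  ultimately show ?thesis
    using \<open>tval E\<close> E by (auto simp: ttuple_def)
qed

(* K_tI(V, m_1,tS, ..., m_n,tS), the result of the constructor for tS <: tI applied to V. *)
definition iface_of_struct :: "name \<Rightarrow> name \<Rightarrow> tl \<Rightarrow> mspec list \<Rightarrow> tl" where
  "iface_of_struct i s V Ss = TAp (TC (KI i)) (ttuple (V # map (\<lambda>(m, _). TV (MV m s)) Ss))"

lemma tval_iface_of_struct: "tval V \<Longrightarrow> tval (iface_of_struct i s V Ss)"
  unfolding iface_of_struct_def ttuple_def conapp_single[symmetric]
  by (auto intro!: tval.intros)

lemma tsubst_iface_of_struct:
  "dom \<rho> \<subseteq> range LV \<Longrightarrow> tsubst \<rho> (iface_of_struct i s V Ss) = iface_of_struct i s (tsubst \<rho> V) Ss"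
  by (auto simp: iface_of_struct_def ttuple_def tsubst_conapp split: prod.split option.split)

lemma fv_iface_of_struct_local:
  "fv (iface_of_struct i s V Ss) \<inter> range LV = fv V \<inter> range LV"
  by (auto simp: iface_of_struct_def ttuple_def fv_conapp)

lemma constr_TS_TI:
  "constr D (TS s) (TI i) E \<Longrightarrow>
   \<exists>Ss. DIface i Ss \<in> set D \<and> set Ss \<subseteq> methods D (TS s) \<and> E = TLam vX (iface_of_struct i s (TV vX) Ss)"
  by (erule constr.cases) (auto simp: iface_of_struct_def)

lemma destr_TLam: "destr D t u E \<Longrightarrow> \<exists>B. E = TLam vX B"
  by (erule destr.cases) auto

lemma struct_dispatch_run:
  assumes "(tstep \<sigma>)\<^sup>*\<^sup>* (TCase (TAp (TC (KS u)) W) [(KS s, [vYp], TAp (TC (KS s)) (TV vYp))]) V"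
    and "tval V" and "tval (TAp (TC (KS u)) W)"
  shows "s = u \<and> V = TAp (TC (KS u)) W"
proof -
  from case_run[OF assms] have "s = u" and "(tstep \<sigma>)\<^sup>*\<^sup>* (TAp (TC (KS u)) W) V"
    by (auto simp: conapp_single[symmetric] tsubst_conapp)
  with assms(3) show ?thesis by (auto dest: tval_rtranclp_tstep)
qed

lemma iface_dispatch_run:
  assumes "(tstep \<sigma>)\<^sup>*\<^sup>*
      (TCase V0 (map (\<lambda>(s, E). (KS s, [vYp], TAp E (TAp (TC (KS s)) (TV vYp)))) sEs)) V"
    and "tval V" and "tval V0" and V0: "V0 = TAp (TC (KS u)) W"
    and constrs: "\<forall>(s, E) \<in> set sEs. constr D (TS s) (TI j) E"
  shows "\<exists>Ss. DIface j Ss \<in> set D \<and> set Ss \<subseteq> methods D (TS u) \<and> V = iface_of_struct j u V0 Ss"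
proof -
  from case_run[OF assms(1-3)] V0 obtain E where "(u, E) \<in> set sEs"
    and run: "(tstep \<sigma>)\<^sup>*\<^sup>* (tsubst [vYp \<mapsto> W] (TAp E (TAp (TC (KS u)) (TV vYp)))) V"
    by (auto simp: conapp_single[symmetric])
  with constrs obtain Ss where Ss: "DIface j Ss \<in> set D" "set Ss \<subseteq> methods D (TS u)"
    and E: "E = TLam vX (iface_of_struct j u (TV vX) Ss)"
    by (blast dest: constr_TS_TI)
  have "tsubst [vYp \<mapsto> W] E = E"
    unfolding E by (intro tsubst_id) (use fv_iface_of_struct_local[of j u "TV vX" Ss] in auto)
  with run V0 have "(tstep \<sigma>)\<^sup>*\<^sup>* (TAp E V0) V" by simp
  from beta_run[OF this[unfolded E] \<open>tval V\<close>]
  have "(tstep \<sigma>)\<^sup>*\<^sup>* (iface_of_struct j u V0 Ss) V"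
    by (simp add: tsubst_iface_of_struct)
  with tval_iface_of_struct[OF \<open>tval V0\<close>] Ss show ?thesis
    by (auto dest: tval_rtranclp_tstep)
qed

lemma iface_dispatch_local_closed:
  assumes "\<forall>(s, E) \<in> set sEs. constr D (TS s) (TI j) E"
  shows "local_closed_clauses (map (\<lambda>(s, E). (KS s, [vYp], TAp E (TAp (TC (KS s)) (TV vYp)))) sEs)"
proof -
  have "fv E \<inter> range LV = {}" if "constr D (TS s) (TI j) E" for s E
  proof -
    from constr_TS_TI[OF that] obtain Ss where "E = TLam vX (iface_of_struct j s (TV vX) Ss)"
      by blast
    with fv_iface_of_struct_local[of j s "TV vX" Ss] show ?thesis
      by (auto simp: set_eq_iff)
  qed
  then show ?thesis
    using assms unfolding local_closed_clauses_def by fastforce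
qed

lemma methodLookup_eq:
  assumes "wf_decls D" and "DMeth x s m M e \<in> set D"
  shows "methodLookup D m s = DMeth x s m M e"
  unfolding methodLookup_def
proof (rule the_equality)
  fix d assume "d \<in> set D \<and> (\<exists>x' M' e'. d = DMeth x' s m M' e')"
  with assms show "d = DMeth x s m M e"
    unfolding wf_decls_def by blast
qed (use assms(2) in simp)

lemma meth_rel_with_mono_cong:
  assumes "meth_rel_with D \<sigma> R k S d V" and "k' \<le> k" and "\<forall>j \<le> k'. R' j = R j"
  shows "meth_rel_with D \<sigma> R' k' S d V"
proof -
  have exp: "exp_rel_with D \<sigma> R' k'' t e E" if "exp_rel_with D \<sigma> R k'' t e E" and "k'' \<le> k'" for k'' t e E
    using that assms(3) unfolding exp_rel_with_def by (metis diff_le_self le_trans)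
  from assms(1) show ?thesis
    unfolding meth_rel_with_def
    by (elim exE conjE, intro exI conjI allI impI exp) (use assms(2,3) in auto)
qed

lemma val_rel_TI_elim:
  "val_rel D \<sigma> j (TI i) v E \<Longrightarrow>
   \<exists>u W Vs. E = TAp (TC (KI i)) (ttuple (TAp (TC (KS u)) W # Vs))
     \<and> (\<forall>k < j. val_rel D \<sigma> k (TS u) v (TAp (TC (KS u)) W))"
  by (subst (asm) val_rel.simps) (erule val_lvl.cases; auto)

lemma exp_rel_val_rel:
  assumes "exp_rel D \<sigma> k t e E" and "n < k" and "(fstep D ^^ n) e v" and "fval v" and "tval E"
  shows "val_rel D \<sigma> (k - n) t v E"
proof -
  have "fsteps_le D n e v" and "tsteps_le \<sigma> 0 E E"
    using assms(3-5) by (auto simp: fsteps_le_def tsteps_le_def)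
  with assms(1,2) show ?thesis
    unfolding exp_rel_def exp_rel_with_def by fastforce
qed

lemma iface_of_struct_val_rel:
  assumes "wf_decls D" and "decls_rel D \<sigma> k" and "K \<le> k"
    and "DIface j Ss \<in> set D" and "set Ss \<subseteq> methods D (TS u)"
    and "V0 = TAp (TC (KS u)) W" and "\<forall>k' < K. val_rel D \<sigma> k' (TS u) v V0"
  shows "val_rel D \<sigma> K (TI j) v (iface_of_struct j u V0 Ss)"
proof -
  define R where "R = (\<lambda>j. if j < K then val_rel D \<sigma> j else (\<lambda>_ _ _. False))"
  have meth: "meth_rel_with D \<sigma> R k' S (methodLookup D (fst S) u) (TV (MV (fst S) u))"
    if "k' < K" and "S \<in> set Ss" for k' S
  proof -
    obtain m M where S: "S = (m, M)" by fastforce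
    from that(2) assms(5) S obtain x e where d: "DMeth x u m M e \<in> set D" by auto
    with assms(2) have "meth_rel_with D \<sigma> (val_rel D \<sigma>) k (m, M) (DMeth x u m M e) (TV (MV m u))"
      by (simp add: decls_rel_def meth_rel_def)
    then have "meth_rel_with D \<sigma> R k' (m, M) (DMeth x u m M e) (TV (MV m u))"
      by (rule meth_rel_with_mono_cong) (use that(1) assms(3) in \<open>auto simp: R_def\<close>)
    then show ?thesis by (simp add: S methodLookup_eq[OF assms(1) d])
  qed
  have "val_lvl D \<sigma> R K (TI j) v (iface_of_struct j u V0 Ss)"
    unfolding iface_of_struct_def
  proof (rule val_lvl.Iface[OF assms(6) _ assms(4)])
    show "\<forall>k' < K. \<forall>q < length Ss. meth_rel_with D \<sigma> R k' (Ss ! q) (methodLookup D (fst (Ss ! q)) u)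
            (map (\<lambda>(m, _). TV (MV m u)) Ss ! q)"
      using meth nth_mem by (auto simp: split_beta)
  qed (use assms(7) in \<open>auto simp: R_def\<close>)
  then show ?thesis
    by (subst val_rel.simps) (simp add: R_def)
qed

lemma destr_val_rel:
  assumes "wf_decls D" and "decls_rel D \<sigma> k" and "destr D t u E1"
    and "K < j" and "j \<le> k" and "val_rel D \<sigma> j t v E2"
    and run: "(tstep \<sigma>)\<^sup>*\<^sup>* (TAp E1 E2) V" and "tval V"
  shows "val_rel D \<sigma> K u v V"
  using assms(3)
proof cases
  case (to_struct i Rs s)
  have "local_closed_clauses [(KS s, [vYp], TAp (TC (KS s)) (TV vYp))]"
    by (simp add: local_closed_clauses_def)
  from iface_unpack_run[OF run[unfolded to_struct(3)] \<open>tval V\<close> this] obtain V0 Vs where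
    E2: "E2 = TAp (TC (KI i)) (ttuple (V0 # Vs))" and "tval V0"
    and dispatch: "(tstep \<sigma>)\<^sup>*\<^sup>* (TCase V0 [(KS s, [vYp], TAp (TC (KS s)) (TV vYp))]) V"
    by blast
  from val_rel_TI_elim assms(6) to_struct(1) E2 obtain u' W where
    V0: "V0 = TAp (TC (KS u')) W" and rel: "\<forall>k' < j. val_rel D \<sigma> k' (TS u') v V0"
    by fastforce
  from struct_dispatch_run[OF dispatch[unfolded V0] \<open>tval V\<close> \<open>tval V0\<close>[unfolded V0]]
  have "s = u'" and "V = V0" by (simp_all add: V0)
  with rel \<open>K < j\<close> to_struct(2) show ?thesis by simp
next
  case (to_iface i Rs sEs j')
  from iface_unpack_run[OF run[unfolded to_iface(3)] \<open>tval V\<close>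
      iface_dispatch_local_closed[OF to_iface(6)]]
  obtain V0 Vs where E2: "E2 = TAp (TC (KI i)) (ttuple (V0 # Vs))" and "tval V0"
    and dispatch: "(tstep \<sigma>)\<^sup>*\<^sup>*
      (TCase V0 (map (\<lambda>(s, E). (KS s, [vYp], TAp E (TAp (TC (KS s)) (TV vYp)))) sEs)) V"
    by blast
  from val_rel_TI_elim assms(6) to_iface(1) E2 obtain u' W where
    V0: "V0 = TAp (TC (KS u')) W" and rel: "\<forall>k' < j. val_rel D \<sigma> k' (TS u') v V0"
    by fastforce
  from iface_dispatch_run[OF dispatch \<open>tval V\<close> \<open>tval V0\<close> V0 to_iface(6)] obtain Ss where
    "DIface j' Ss \<in> set D" and "set Ss \<subseteq> methods D (TS u')" and "V = iface_of_struct j' u' V0 Ss"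
    by blast
  with iface_of_struct_val_rel[OF assms(1,2), of K] V0 rel assms(4,5) to_iface(2) show ?thesis
    by simp
qed

theorem lemma3:
  fixes D :: decls and \<sigma> :: "tvar \<rightharpoonup> tl" and t u :: ty and e :: fexp
    and E1 E2 :: tl and k :: nat
  assumes "wf_decls D"
    and "method_subst \<sigma>"
    and "destr D t u E1"
    and "decls_rel D \<sigma> k"
    and "exp_rel D \<sigma> k t e E2"
  shows "exp_rel D \<sigma> k u (FAssert e u) (TAp E1 E2)"
  unfolding exp_rel_def exp_rel_with_def
proof (intro allI impI)
  fix k1 k2 v V
  assume "k1 < k" and "k2 < k" and "0 < k - k1 - k2"
    and "fsteps_le D k1 (FAssert e u) v" and "tsteps_le \<sigma> k2 (TAp E1 E2) V"
  then obtain n1 where "n1 \<le> k1" and "(fstep D ^^ n1) (FAssert e u) v" and "fval v"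
    and run: "(tstep \<sigma>)\<^sup>*\<^sup>* (TAp E1 E2) V" and "tval V"
    by (auto simp: fsteps_le_def tsteps_le_def dest: relpowp_imp_rtranclp)
  then obtain n where "n < n1" and "(fstep D ^^ n) e v"
    using fsteps_FAssert_operand by blast
  from destr_TLam[OF assms(3)] run \<open>tval V\<close> have "tval E2"
    using beta_run by blast
  with exp_rel_val_rel[OF assms(5)] \<open>n < n1\<close> \<open>n1 \<le> k1\<close> \<open>k1 < k\<close> \<open>(fstep D ^^ n) e v\<close> \<open>fval v\<close>
  have "val_rel D \<sigma> (k - n) t v E2" by simp
  from destr_val_rel[OF assms(1,4,3) _ _ this run \<open>tval V\<close>] \<open>0 < k - k1 - k2\<close> \<open>n < n1\<close> \<open>n1 \<le> k1\<close>
  show "val_rel D \<sigma> (k - k1 - k2) u v V" by simp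
qed

end
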